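(* Let $G=(V,E)$ be a reduced undirected graph (parallel edges allowed) with terminals $s,t$, and let $T\subseteq E$ be a tracking edge set for $G$. Then every cycle of $G$ contains an edge belonging to $T$.
   Context: An $s$-$t$ path is a simple path from $s$ to $t$. A set $T\subseteq E$ is a tracking edge set if for any two distinct $s$-$t$ paths $P_1,P_2$, the sequence of edges of $T\cap E(P_1)$ in the order traversed along $P_1$ differs from the sequence of edges of $T\cap E(P_2)$ in the order traversed along $P_2$. A graph is reduced if every vertex and every edge lies on at least one $s$-$t$ path. *)

theory Defs
  imports Main
begin

definition multigraph :: "'v set \<Rightarrow> 'e set \<Rightarrow> ('e \<Rightarrow> 'v set) \<Rightarrow> bool" where
  "multigraph V E ends \<longleftrightarrow> finite V \<and> finite E \<and>
     (\<forall>e\<in>E. \<exists>u v. u \<in> V \<and> v \<in> V \<and> ends e = {u, v})"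

definition is_walk :: "'v set \<Rightarrow> 'e set \<Rightarrow> ('e \<Rightarrow> 'v set) \<Rightarrow> 'v list \<Rightarrow> 'e list \<Rightarrow> bool" where
  "is_walk V E ends vs es \<longleftrightarrow> vs \<noteq> [] \<and> length vs = Suc (length es) \<and> set vs \<subseteq> V \<and>
     set es \<subseteq> E \<and> (\<forall>i < length es. ends (es ! i) = {vs ! i, vs ! Suc i})"

definition st_path :: "'v set \<Rightarrow> 'e set \<Rightarrow> ('e \<Rightarrow> 'v set) \<Rightarrow> 'v \<Rightarrow> 'v \<Rightarrow> 'v list \<Rightarrow> 'e list \<Rightarrow> bool" where
  "st_path V E ends s t vs es \<longleftrightarrow> is_walk V E ends vs es \<and> distinct vs \<and>
     hd vs = s \<and> last vs = t"

definition reduced :: "'v set \<Rightarrow> 'e set \<Rightarrow> ('e \<Rightarrow> 'v set) \<Rightarrow> 'v \<Rightarrow> 'v \<Rightarrow> bool" where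
  "reduced V E ends s t \<longleftrightarrow>
     (\<forall>v\<in>V. \<exists>vs es. st_path V E ends s t vs es \<and> v \<in> set vs) \<and>
     (\<forall>e\<in>E. \<exists>vs es. st_path V E ends s t vs es \<and> e \<in> set es)"

definition tracking_set :: "'v set \<Rightarrow> 'e set \<Rightarrow> ('e \<Rightarrow> 'v set) \<Rightarrow> 'v \<Rightarrow> 'v \<Rightarrow> 'e set \<Rightarrow> bool" where
  "tracking_set V E ends s t T \<longleftrightarrow> T \<subseteq> E \<and>
     (\<forall>vs1 es1 vs2 es2. st_path V E ends s t vs1 es1 \<and> st_path V E ends s t vs2 es2 \<and>
        (vs1, es1) \<noteq> (vs2, es2) \<longrightarrow> filter (\<lambda>e. e \<in> T) es1 \<noteq> filter (\<lambda>e. e \<in> T) es2)"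

text \<open>A cycle: n \<ge> 1 distinct vertices vs and n distinct edges es, where es!i joins
  vs!i and vs!((i+1) mod n). (n = 2 covers two parallel edges, n = 1 a loop.)\<close>
definition is_cycle :: "'v set \<Rightarrow> 'e set \<Rightarrow> ('e \<Rightarrow> 'v set) \<Rightarrow> 'v list \<Rightarrow> 'e list \<Rightarrow> bool" where
  "is_cycle V E ends vs es \<longleftrightarrow> es \<noteq> [] \<and> length vs = length es \<and> distinct vs \<and> distinct es \<and>
     set vs \<subseteq> V \<and> set es \<subseteq> E \<and>
     (\<forall>i < length es. ends (es ! i) = {vs ! i, vs ! ((Suc i) mod length es)})"

end

theory Submission
  imports Defs
begin

text \<open>Suppose a cycle \<open>C\<close> has no edge in \<open>T\<close>. As the graph is reduced, some \<open>s\<close>-\<open>t\<close> path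
  \<open>P\<close> uses an edge of \<open>C\<close>; let \<open>x\<close> and \<open>y\<close> be the first and the last vertex of \<open>P\<close> on \<open>C\<close>.
  Replacing the segment of \<open>P\<close> from \<open>x\<close> to \<open>y\<close> by either of the two arcs of \<open>C\<close> between
  \<open>x\<close> and \<open>y\<close> yields two \<open>s\<close>-\<open>t\<close> paths, since the rest of \<open>P\<close> avoids \<open>C\<close>. They are
  different: an edge of one arc lies neither on the other arc nor, having both ends on \<open>C\<close>,
  on \<open>P\<close> outside the segment. Yet both carry the \<open>T\<close>-edges of \<open>P\<close> outside the segment and
  no others, contradicting the tracking property.\<close>

lemma first_last_index_in:
  assumes "p < q" "q < length xs" "xs ! p \<in> S" "xs ! q \<in> S"
  obtains i j where "i < j" "j < length xs" "xs ! i \<in> S" "xs ! j \<in> S"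
    "\<forall>k < length xs. xs ! k \<in> S \<longrightarrow> i \<le> k \<and> k \<le> j"
proof -
  define I where "I = {k. k < length xs \<and> xs ! k \<in> S}"
  have I: "finite I" "p \<in> I" "q \<in> I" using assms unfolding I_def by auto
  show ?thesis
  proof
    show "Min I < Max I" using I assms(1) by (meson Min_le Max_ge le_less_trans less_le_trans)
    have "Min I \<in> I" "Max I \<in> I" using I Min_in Max_in by blast+
    then show "Max I < length xs" "xs ! Min I \<in> S" "xs ! Max I \<in> S"
      unfolding I_def by auto
    show "\<forall>k < length xs. xs ! k \<in> S \<longrightarrow> Min I \<le> k \<and> k \<le> Max I"
      using I(1) unfolding I_def by auto
  qed
qed

lemma set_take_drop_outside_segment:
  assumes "\<forall>k < length xs. xs ! k \<in> S \<longrightarrow> i \<le> k \<and> k \<le> j"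
  shows "set (take i xs) \<inter> S = {}" "set (drop (Suc j) xs) \<inter> S = {}"
proof -
  show "set (take i xs) \<inter> S = {}"
    using assms by (fastforce simp: in_set_conv_nth)
  show "set (drop (Suc j) xs) \<inter> S = {}"
  proof (rule ccontr)
    assume "set (drop (Suc j) xs) \<inter> S \<noteq> {}"
    then obtain k where "k < length xs - Suc j" "drop (Suc j) xs ! k \<in> S"
      by (auto simp: in_set_conv_nth)
    then have "Suc j + k < length xs" "xs ! (Suc j + k) \<in> S" by auto
    then show False using assms by fastforce
  qed
qed

lemma is_walk_append:
  assumes "is_walk V E ends vs1 es1" "is_walk V E ends vs2 es2" "last vs1 = hd vs2"
  shows "is_walk V E ends (vs1 @ tl vs2) (es1 @ es2)"
proof -
  have l1: "length vs1 = Suc (length es1)" "vs1 \<noteq> []"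
    and l2: "length vs2 = Suc (length es2)" "vs2 \<noteq> []"
    using assms unfolding is_walk_def by auto
  have joint: "vs1 ! length es1 = vs2 ! 0"
    using assms(3) l1 l2 by (simp add: last_conv_nth hd_conv_nth)
  have tl2: "tl vs2 ! k = vs2 ! Suc k" if "k < length es2" for k
    using l2 that by (simp add: nth_tl)
  have "ends ((es1 @ es2) ! i) = {(vs1 @ tl vs2) ! i, (vs1 @ tl vs2) ! Suc i}"
    if i: "i < length (es1 @ es2)" for i
  proof (cases "i < length es1")
    case True
    then show ?thesis using assms(1) l1 unfolding is_walk_def by (simp add: nth_append)
  next
    case False
    then obtain k where k: "i = length es1 + k" "k < length es2"
      using i by (metis add_diff_inverse_nat length_append nat_add_left_cancel_less)
    have e: "ends (es2 ! k) = {vs2 ! k, vs2 ! Suc k}"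
      using assms(2) k unfolding is_walk_def by auto
    show ?thesis
    proof (cases k)
      case 0
      then show ?thesis using k e l1 joint tl2[of 0] by (simp add: nth_append)
    next
      case (Suc m)
      then show ?thesis using k e l1 tl2[of m] tl2[of k] by (simp add: nth_append)
    qed
  qed
  moreover have "set (tl vs2) \<subseteq> set vs2" using l2 by (simp add: list.set_sel(2) subsetI)
  ultimately show ?thesis using assms l1 l2 unfolding is_walk_def by auto
qed

lemma is_walk_take:
  assumes "is_walk V E ends vs es" "k < length vs"
  shows "is_walk V E ends (take (Suc k) vs) (take k es)"
  using assms unfolding is_walk_def
  by (auto dest: in_set_takeD)

lemma is_walk_drop:
  assumes "is_walk V E ends vs es" "k < length vs"
  shows "is_walk V E ends (drop k vs) (drop k es)"
  using assms unfolding is_walk_def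
  by (auto dest: in_set_dropD simp: add.commute add_Suc_right)

lemma is_walk_rev:
  assumes "is_walk V E ends vs es"
  shows "is_walk V E ends (rev vs) (rev es)"
proof -
  have l: "length vs = Suc (length es)" using assms unfolding is_walk_def by auto
  have "\<forall>i < length es. ends (rev es ! i) = {rev vs ! i, rev vs ! Suc i}"
  proof (intro allI impI)
    fix i assume i: "i < length es"
    have "ends (es ! (length es - Suc i)) = {vs ! (length es - Suc i), vs ! Suc (length es - Suc i)}"
      using assms i unfolding is_walk_def by auto
    then show "ends (rev es ! i) = {rev vs ! i, rev vs ! Suc i}"
      using i l by (simp add: rev_nth Suc_diff_Suc insert_commute)
  qed
  then show ?thesis using assms unfolding is_walk_def by auto
qed

lemma is_walk_edge_outside_segment:
  assumes "is_walk V E ends qv qe" "\<forall>k < length qv. qv ! k \<in> S \<longrightarrow> i \<le> k \<and> k \<le> j"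
    and "ends e \<subseteq> S"
  shows "e \<notin> set (take i qe)" "e \<notin> set (drop j qe)"
proof -
  have edge: "i \<le> k \<and> Suc k \<le> j" if "k < length qe" "qe ! k = e" for k
  proof -
    have "qv ! k \<in> S" "qv ! Suc k \<in> S" "Suc k < length qv"
      using assms that unfolding is_walk_def by auto
    then show ?thesis using assms(2) by auto
  qed
  show "e \<notin> set (take i qe)"
    using edge by (force simp: in_set_conv_nth)
  show "e \<notin> set (drop j qe)"
  proof
    assume "e \<in> set (drop j qe)"
    then obtain k where "k < length qe - j" "drop j qe ! k = e" by (auto simp: in_set_conv_nth)
    then have "j + k < length qe" "qe ! (j + k) = e" by auto
    then show False using edge by fastforce
  qed
qed

definition is_path ::
    "'v set \<Rightarrow> 'e set \<Rightarrow> ('e \<Rightarrow> 'v set) \<Rightarrow> 'v \<Rightarrow> 'v \<Rightarrow> 'v list \<Rightarrow> 'e list \<Rightarrow> bool" where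
  "is_path V E ends x y vs es \<longleftrightarrow>
     is_walk V E ends vs es \<and> distinct vs \<and> hd vs = x \<and> last vs = y"

lemma st_path_iff_is_path: "st_path V E ends s t vs es \<longleftrightarrow> is_path V E ends s t vs es"
  unfolding st_path_def is_path_def ..

lemma is_path_rev:
  assumes "is_path V E ends x y vs es"
  shows "is_path V E ends y x (rev vs) (rev es)"
  using assms is_walk_rev unfolding is_path_def
  by (auto simp: hd_rev last_rev)

lemma is_path_splice:
  assumes Q: "is_path V E ends s t qv qe"
    and ij: "i \<le> j" "j < length qv"
    and outside: "\<forall>k < length qv. qv ! k \<in> S \<longrightarrow> i \<le> k \<and> k \<le> j"
    and A: "is_path V E ends (qv ! i) (qv ! j) av ae" and "set av \<subseteq> S"
  shows "is_path V E ends s t (take i qv @ av @ drop (Suc j) qv) (take i qe @ ae @ drop j qe)"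
proof -
  have qw: "is_walk V E ends qv qe" and aw: "is_walk V E ends av ae"
    using Q A unfolding is_path_def by auto
  have "av \<noteq> []" using aw unfolding is_walk_def by simp
  then have av: "av = qv ! i # tl av" "av = butlast av @ [qv ! j]"
    using A unfolding is_path_def by (metis list.collapse, metis append_butlast_last_id)
  have pre: "take i qv @ av = take (Suc i) qv @ tl av"
    using ij by (subst av(1)) (simp add: take_Suc_conv_app_nth)
  have post: "av @ drop (Suc j) qv = butlast av @ drop j qv"
    using ij by (subst av(2)) (simp add: Cons_nth_drop_Suc)
  have "is_walk V E ends ((take (Suc i) qv @ tl av) @ tl (drop j qv)) ((take i qe @ ae) @ drop j qe)"
  proof (rule is_walk_append[OF is_walk_append])
    show "is_walk V E ends (take (Suc i) qv) (take i qe)" using is_walk_take[OF qw] ij by simp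
    show "is_walk V E ends (drop j qv) (drop j qe)" using is_walk_drop[OF qw] ij by simp
    show "last (take (Suc i) qv) = hd av" using A ij unfolding is_path_def
      by (simp add: take_Suc_conv_app_nth)
    show "last (take (Suc i) qv @ tl av) = hd (drop j qv)"
      using A ij pre[symmetric] \<open>av \<noteq> []\<close> unfolding is_path_def by (simp add: hd_drop_conv_nth)
  qed (rule aw)
  then have walk: "is_walk V E ends (take i qv @ av @ drop (Suc j) qv) (take i qe @ ae @ drop j qe)"
    using pre by (metis append.assoc drop_Suc tl_drop)
  have "set (take i qv) \<inter> S = {}" "set (drop (Suc j) qv) \<inter> S = {}"
    using outside by (rule set_take_drop_outside_segment)+
  moreover have "set (take i qv) \<inter> set (drop (Suc j) qv) = {}"
    using Q ij unfolding is_path_def by (simp add: set_take_disj_set_drop_if_distinct)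
  ultimately have "distinct (take i qv @ av @ drop (Suc j) qv)"
    using Q A \<open>set av \<subseteq> S\<close> unfolding is_path_def by (auto simp: distinct_append)
  moreover have "hd (take i qv @ av @ drop (Suc j) qv) = s"
  proof -
    have "hd (take i qv @ av @ drop (Suc j) qv) = hd (take (Suc i) qv @ tl av @ drop (Suc j) qv)"
      using pre by (metis append.assoc)
    also have "\<dots> = hd (take (Suc i) qv)"
      using ij by (intro hd_append2) auto
    also have "\<dots> = s" using Q unfolding is_path_def by (simp add: hd_take)
    finally show ?thesis .
  qed
  moreover have "last (take i qv @ av @ drop (Suc j) qv) = t"
    using Q ij post unfolding is_path_def by (simp add: last_drop)
  ultimately show ?thesis using walk unfolding is_path_def by simp
qed

lemma is_cycle_ends_subset:
  assumes "is_cycle V E ends vs es" "e \<in> set es"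
  shows "ends e \<subseteq> set vs"
proof -
  from assms obtain i where i: "i < length es" "e = es ! i" by (auto simp: in_set_conv_nth)
  with assms(1) show ?thesis unfolding is_cycle_def by auto
qed

lemma is_cycle_rotate:
  assumes "is_cycle V E ends vs es"
  shows "is_cycle V E ends (rotate a vs) (rotate a es)"
proof -
  let ?n = "length es"
  have n: "?n > 0" "length vs = ?n" using assms unfolding is_cycle_def by auto
  have "ends (rotate a es ! i) = {rotate a vs ! i, rotate a vs ! (Suc i mod ?n)}" if "i < ?n" for i
  proof -
    have "ends (es ! ((a + i) mod ?n)) = {vs ! ((a + i) mod ?n), vs ! (Suc ((a + i) mod ?n) mod ?n)}"
      using assms n unfolding is_cycle_def by simp
    then show ?thesis
      using that n by (simp add: nth_rotate mod_Suc_eq mod_add_right_eq)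
  qed
  then show ?thesis using assms unfolding is_cycle_def by simp
qed

lemma is_cycle_prefix_path:
  assumes "is_cycle V E ends vs es" "L < length es"
  shows "is_path V E ends (vs ! 0) (vs ! L) (take (Suc L) vs) (take L es)"
proof -
  have "ends (es ! i) = {vs ! i, vs ! Suc i}" if "i < L" for i
    using assms that unfolding is_cycle_def by auto
  moreover have "vs \<noteq> []" "L < length vs" using assms unfolding is_cycle_def by auto
  ultimately show ?thesis using assms unfolding is_cycle_def is_path_def is_walk_def
    by (auto simp: hd_conv_nth last_conv_nth dest: in_set_takeD)
qed

lemma cycle_two_arcs:
  assumes cyc: "is_cycle V E ends vs es" and xy: "x \<in> set vs" "y \<in> set vs" "x \<noteq> y"
  obtains av1 ae1 av2 ae2 e where
    "is_path V E ends x y av1 ae1" "is_path V E ends x y av2 ae2"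
    "set av1 \<subseteq> set vs" "set av2 \<subseteq> set vs" "set ae1 \<subseteq> set es" "set ae2 \<subseteq> set es"
    "e \<in> set ae1" "e \<notin> set ae2"
proof -
  let ?n = "length es"
  have n: "length vs = ?n" "?n > 0" using cyc unfolding is_cycle_def by auto
  obtain a where a: "a < ?n" "vs ! a = x" using xy(1) n by (auto simp: in_set_conv_nth)
  define ys where "ys = rotate a vs"
  define fs where "fs = rotate a es"
  have cyc': "is_cycle V E ends ys fs" unfolding ys_def fs_def using cyc by (rule is_cycle_rotate)
  have ys: "length ys = ?n" "ys ! 0 = x" "set ys = set vs"
    using a n unfolding ys_def by (simp_all add: nth_rotate)
  have fs: "length fs = ?n" "distinct fs" "set fs = set es"
    using cyc unfolding fs_def is_cycle_def by simp_all
  obtain d where d: "d < ?n" "ys ! d = y" using xy(2) ys by (metis in_set_conv_nth)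
  have "d \<noteq> 0" using d(2) ys(2) xy(3) by metis
  have arc1: "is_path V E ends x y (take (Suc d) ys) (take d fs)"
    using is_cycle_prefix_path[OF cyc', of d] d fs ys by simp
  have "rotate d ys ! 0 = y" "rotate d ys ! (?n - d) = x"
    using d ys n \<open>d \<noteq> 0\<close> by (simp_all add: nth_rotate)
  then have "is_path V E ends y x (take (Suc (?n - d)) (rotate d ys)) (take (?n - d) (rotate d fs))"
    using is_cycle_prefix_path[OF is_cycle_rotate[OF cyc', of d], of "?n - d"] fs n \<open>d \<noteq> 0\<close>
    by simp
  then have arc2: "is_path V E ends x y
      (rev (take (Suc (?n - d)) (rotate d ys))) (rev (take (?n - d) (rotate d fs)))"
    by (rule is_path_rev)
  have "take (?n - d) (rotate d fs) = drop d fs"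
    using d fs by (simp add: rotate_drop_take)
  moreover have "fs ! 0 \<in> set (take d fs)"
    using d fs \<open>d \<noteq> 0\<close> by (auto simp: in_set_conv_nth)
  moreover have "set (take d fs) \<inter> set (drop d fs) = {}"
    using fs(2) by (metis append_take_drop_id distinct_append)
  ultimately show ?thesis
    using that[OF arc1 arc2] ys fs set_take_subset[of _ ys] set_take_subset[of _ "rotate d ys"]
      set_take_subset[of d fs] set_drop_subset[of d fs] by auto
qed

lemma reduced_path_meets_cycle:
  assumes "reduced V E ends s t" and cyc: "is_cycle V E ends vs es"
  obtains qv qe i j where "is_path V E ends s t qv qe"
    "i < j" "j < length qv" "qv ! i \<in> set vs" "qv ! j \<in> set vs"
    "\<forall>k < length qv. qv ! k \<in> set vs \<longrightarrow> i \<le> k \<and> k \<le> j"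
proof -
  have e0: "es ! 0 \<in> set es" "es ! 0 \<in> E" using cyc unfolding is_cycle_def by auto
  then obtain qv qe where Q: "is_path V E ends s t qv qe" and "es ! 0 \<in> set qe"
    using assms(1) unfolding reduced_def st_path_iff_is_path by blast
  then obtain p where "p < length qe" "qe ! p = es ! 0" by (auto simp: in_set_conv_nth)
  then have "Suc p < length qv" "qv ! p \<in> set vs" "qv ! Suc p \<in> set vs"
    using Q is_cycle_ends_subset[OF cyc e0(1)] unfolding is_path_def is_walk_def by auto
  then show ?thesis
    using that[OF Q] by (rule first_last_index_in[OF lessI])
qed

theorem mainTheorem10:
  fixes V :: "'v set" and E :: "'e set" and ends :: "'e \<Rightarrow> 'v set"
    and s t :: 'v and T :: "'e set"
  assumes "multigraph V E ends"
    and "s \<in> V" and "t \<in> V"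
    and "reduced V E ends s t"
    and "tracking_set V E ends s t T"
    and "is_cycle V E ends vs es"
  shows "\<exists>e \<in> set es. e \<in> T"
proof (rule ccontr)
  assume "\<not> (\<exists>e \<in> set es. e \<in> T)"
  then have untracked: "filter (\<lambda>e. e \<in> T) ae = []" if "set ae \<subseteq> set es" for ae
    using that by (auto simp: filter_empty_conv)
  note cyc = assms(6)
  obtain qv qe i j where Q: "is_path V E ends s t qv qe"
    and ij: "i < j" "j < length qv" "qv ! i \<in> set vs" "qv ! j \<in> set vs"
    and outside: "\<forall>k < length qv. qv ! k \<in> set vs \<longrightarrow> i \<le> k \<and> k \<le> j"
    using reduced_path_meets_cycle[OF assms(4) cyc] by blast
  have "qv ! i \<noteq> qv ! j" using Q ij unfolding is_path_def by (simp add: nth_eq_iff_index_eq)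
  obtain av1 ae1 av2 ae2 e where arcs:
      "is_path V E ends (qv ! i) (qv ! j) av1 ae1" "is_path V E ends (qv ! i) (qv ! j) av2 ae2"
      "set av1 \<subseteq> set vs" "set av2 \<subseteq> set vs" "set ae1 \<subseteq> set es" "set ae2 \<subseteq> set es"
      and e: "e \<in> set ae1" "e \<notin> set ae2"
    by (rule cycle_two_arcs[OF cyc ij(3,4) \<open>qv ! i \<noteq> qv ! j\<close>])
  define es1 where "es1 = take i qe @ ae1 @ drop j qe"
  define es2 where "es2 = take i qe @ ae2 @ drop j qe"
  have "st_path V E ends s t (take i qv @ av1 @ drop (Suc j) qv) es1"
    "st_path V E ends s t (take i qv @ av2 @ drop (Suc j) qv) es2"
    unfolding es1_def es2_def st_path_iff_is_path
    using is_path_splice[OF Q less_imp_le[OF ij(1)] ij(2) outside] arcs(1-4) by simp_all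
  moreover have "es1 \<noteq> es2"
  proof -
    have ends_e: "ends e \<subseteq> set vs" using is_cycle_ends_subset[OF cyc] e(1) arcs(5) by blast
    have qw: "is_walk V E ends qv qe" using Q unfolding is_path_def by simp
    have "e \<in> set es1" using e(1) unfolding es1_def by simp
    moreover have "e \<notin> set es2"
      using e(2) is_walk_edge_outside_segment[OF qw outside ends_e] unfolding es2_def by simp
    ultimately show ?thesis by metis
  qed
  ultimately have "filter (\<lambda>e. e \<in> T) es1 \<noteq> filter (\<lambda>e. e \<in> T) es2"
    using assms(5) unfolding tracking_set_def by blast
  then show False unfolding es1_def es2_def using untracked arcs(5,6) by simp
qed

end
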